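(* Let $\Gamma=(V,\nu,\mu)$ be a fuzzy graph on $n$ vertices. Then $$\sigma^*(\Gamma)\le\frac{(n-1)^2\,\bigl(2\,\mathrm{ew}(\Gamma)\bigr)^2}{n^3}.$$
   Context: A fuzzy graph $\Gamma=(V,\nu,\mu)$ consists of a finite vertex set $V$ with $|V|=n\ge1$, a map $\nu:V\to[0,1]$, and a symmetric map $\mu:V\times V\to[0,1]$ with $\mu(u,v)\le\min(\nu(u),\nu(v))$. The fuzzy degree is $d_\Gamma(v)=\sum_{u\ne v}\mu(v,u)$, the fuzzy size is $\mathrm{ew}(\Gamma)=\sum_{\{u,v\},u\ne v}\mu(u,v)$, $\lambda=2\,\mathrm{ew}(\Gamma)/n$, and the fuzzy sigma index is $\sigma^*(\Gamma)=\frac1n\sum_{v}(d_\Gamma(v)-\lambda)^2$. *)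

theory Defs
  imports Complex_Main
begin

definition fuzzy_graph :: "'a set \<Rightarrow> ('a \<Rightarrow> real) \<Rightarrow> ('a \<Rightarrow> 'a \<Rightarrow> real) \<Rightarrow> bool" where
  "fuzzy_graph V \<nu> \<mu> \<longleftrightarrow> finite V \<and> V \<noteq> {} \<and>
     (\<forall>v\<in>V. 0 \<le> \<nu> v \<and> \<nu> v \<le> 1) \<and>
     (\<forall>u\<in>V. \<forall>v\<in>V. 0 \<le> \<mu> u v \<and> \<mu> u v \<le> 1 \<and> \<mu> u v = \<mu> v u \<and> \<mu> u v \<le> min (\<nu> u) (\<nu> v))"

definition fuzzy_degree :: "'a set \<Rightarrow> ('a \<Rightarrow> 'a \<Rightarrow> real) \<Rightarrow> 'a \<Rightarrow> real" where
  "fuzzy_degree V \<mu> v = (\<Sum>u\<in>V - {v}. \<mu> v u)"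

definition fuzzy_size :: "'a set \<Rightarrow> ('a \<Rightarrow> 'a \<Rightarrow> real) \<Rightarrow> real" where
  "fuzzy_size V \<mu> = (\<Sum>e\<in>{e. \<exists>u\<in>V. \<exists>v\<in>V. u \<noteq> v \<and> e = {u, v}}. (SOME p. \<exists>u v. e = {u,v} \<and> u \<noteq> v \<and> p = \<mu> u v))"

definition fuzzy_lambda :: "'a set \<Rightarrow> ('a \<Rightarrow> 'a \<Rightarrow> real) \<Rightarrow> real" where
  "fuzzy_lambda V \<mu> = 2 * fuzzy_size V \<mu> / real (card V)"

definition fuzzy_sigma_star :: "'a set \<Rightarrow> ('a \<Rightarrow> 'a \<Rightarrow> real) \<Rightarrow> real" where
  "fuzzy_sigma_star V \<mu> = (1 / real (card V)) *
     (\<Sum>v\<in>V. (fuzzy_degree V \<mu> v - fuzzy_lambda V \<mu>)^2)"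

end

theory Submission
  imports Defs
begin

text \<open>Write \<open>d\<^sub>v\<close> for the degrees and \<open>m\<close> for the fuzzy size. Double counting gives
  \<open>\<Sum> d\<^sub>v = 2m\<close> and \<open>0 \<le> d\<^sub>v \<le> m\<close>, hence \<open>\<Sum> d\<^sub>v\<^sup>2 \<le> m \<Sum> d\<^sub>v = 2m\<^sup>2\<close>. Since \<open>\<lambda>\<close> is the mean degree,
  \<open>n \<sigma>* = \<Sum> d\<^sub>v\<^sup>2 - (2m)\<^sup>2/n \<le> 2m\<^sup>2 - 4m\<^sup>2/n\<close>, and the claimed bound exceeds this by
  \<open>2m\<^sup>2((n-1)\<^sup>2 + 1)/n\<^sup>3 \<ge> 0\<close>.\<close>

lemma fuzzy_graph_finite: "fuzzy_graph V \<nu> \<mu> \<Longrightarrow> finite V"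
  and fuzzy_graph_nonempty: "fuzzy_graph V \<nu> \<mu> \<Longrightarrow> V \<noteq> {}"
  and fuzzy_graph_nonneg: "fuzzy_graph V \<nu> \<mu> \<Longrightarrow> u \<in> V \<Longrightarrow> v \<in> V \<Longrightarrow> 0 \<le> \<mu> u v"
  and fuzzy_graph_sym: "fuzzy_graph V \<nu> \<mu> \<Longrightarrow> u \<in> V \<Longrightarrow> v \<in> V \<Longrightarrow> \<mu> u v = \<mu> v u"
  unfolding fuzzy_graph_def by auto

definition fuzzy_edges :: "'a set \<Rightarrow> 'a set set" where
  "fuzzy_edges V = {e. \<exists>u\<in>V. \<exists>v\<in>V. u \<noteq> v \<and> e = {u, v}}"

definition edge_weight :: "('a \<Rightarrow> 'a \<Rightarrow> real) \<Rightarrow> 'a set \<Rightarrow> real" where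
  "edge_weight \<mu> e = (SOME p. \<exists>u v. e = {u,v} \<and> u \<noteq> v \<and> p = \<mu> u v)"

lemma fuzzy_size_eq_sum_edges: "fuzzy_size V \<mu> = (\<Sum>e\<in>fuzzy_edges V. edge_weight \<mu> e)"
  unfolding fuzzy_size_def fuzzy_edges_def edge_weight_def ..

lemma finite_fuzzy_edges: "finite V \<Longrightarrow> finite (fuzzy_edges V)"
  by (rule finite_subset[of _ "Pow V"]) (auto simp: fuzzy_edges_def)

lemma edge_weight_doubleton:
  assumes sym: "\<And>a b. a \<in> V \<Longrightarrow> b \<in> V \<Longrightarrow> \<mu> a b = \<mu> b a"
    and "u \<in> V" "v \<in> V" "u \<noteq> v"
  shows "edge_weight \<mu> {u, v} = \<mu> u v"
  unfolding edge_weight_def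
proof (rule some_equality)
  show "\<exists>a b. {u, v} = {a, b} \<and> a \<noteq> b \<and> \<mu> u v = \<mu> a b"
    using \<open>u \<noteq> v\<close> by blast
next
  fix p assume "\<exists>a b. {u, v} = {a, b} \<and> a \<noteq> b \<and> p = \<mu> a b"
  then obtain a b where "{u, v} = {a, b}" "p = \<mu> a b" by blast
  then show "p = \<mu> u v"
    using sym[OF \<open>u \<in> V\<close> \<open>v \<in> V\<close>] by (auto simp: doubleton_eq_iff)
qed

lemma sum_fuzzy_degree:
  assumes "finite V" and sym: "\<And>a b. a \<in> V \<Longrightarrow> b \<in> V \<Longrightarrow> \<mu> a b = \<mu> b a"
  shows "(\<Sum>v\<in>V. fuzzy_degree V \<mu> v) = 2 * fuzzy_size V \<mu>"
proof -
  define P where "P = {p \<in> V \<times> V. fst p \<noteq> snd p}"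
  define edge where "edge p = {fst p, snd p}" for p :: "'a \<times> 'a"
  have "finite P"
    unfolding P_def using \<open>finite V\<close> by auto
  have "(\<Sum>v\<in>V. fuzzy_degree V \<mu> v) = (\<Sum>p\<in>P. \<mu> (fst p) (snd p))"
  proof -
    have "P = Sigma V (\<lambda>v. V - {v})" unfolding P_def by auto
    then show ?thesis
      using \<open>finite V\<close> by (simp add: fuzzy_degree_def sum.Sigma split_beta)
  qed
  also have "\<dots> = (\<Sum>e\<in>edge ` P. \<Sum>p\<in>{p\<in>P. edge p = e}. \<mu> (fst p) (snd p))"
    using \<open>finite P\<close> by (rule sum.image_gen)
  also have "edge ` P = fuzzy_edges V"
    unfolding P_def edge_def fuzzy_edges_def by force
  also have "(\<Sum>e\<in>fuzzy_edges V. \<Sum>p\<in>{p\<in>P. edge p = e}. \<mu> (fst p) (snd p))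
      = (\<Sum>e\<in>fuzzy_edges V. 2 * edge_weight \<mu> e)"
  proof (rule sum.cong[OF refl])
    fix e assume "e \<in> fuzzy_edges V"
    then obtain u v where uv: "u \<in> V" "v \<in> V" "u \<noteq> v" and e: "e = {u, v}"
      unfolding fuzzy_edges_def by blast
    have "{p\<in>P. edge p = e} = {(u, v), (v, u)}"
      using uv e unfolding P_def edge_def by (auto simp: doubleton_eq_iff)
    then show "(\<Sum>p\<in>{p\<in>P. edge p = e}. \<mu> (fst p) (snd p)) = 2 * edge_weight \<mu> e"
      using uv e sym edge_weight_doubleton[of V \<mu>, OF sym uv] by simp
  qed
  finally show ?thesis
    by (simp add: fuzzy_size_eq_sum_edges sum_distrib_left)
qed

lemma fuzzy_degree_nonneg:
  "(\<And>u. u \<in> V \<Longrightarrow> 0 \<le> \<mu> v u) \<Longrightarrow> 0 \<le> fuzzy_degree V \<mu> v"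
  unfolding fuzzy_degree_def by (rule sum_nonneg) auto

lemma fuzzy_degree_le_fuzzy_size:
  assumes "finite V" and sym: "\<And>a b. a \<in> V \<Longrightarrow> b \<in> V \<Longrightarrow> \<mu> a b = \<mu> b a"
    and nonneg: "\<And>a b. a \<in> V \<Longrightarrow> b \<in> V \<Longrightarrow> 0 \<le> \<mu> a b" and "v \<in> V"
  shows "fuzzy_degree V \<mu> v \<le> fuzzy_size V \<mu>"
proof -
  have "fuzzy_degree V \<mu> v = (\<Sum>u\<in>V - {v}. edge_weight \<mu> {v, u})"
    unfolding fuzzy_degree_def using edge_weight_doubleton[of V \<mu>, OF sym] \<open>v \<in> V\<close>
    by (intro sum.cong) auto
  also have "\<dots> = sum (edge_weight \<mu>) ((\<lambda>u. {v, u}) ` (V - {v}))"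
    by (rule sum.reindex[symmetric, unfolded comp_def]) (auto simp: inj_on_def doubleton_eq_iff)
  also have "\<dots> \<le> sum (edge_weight \<mu>) (fuzzy_edges V)"
  proof (rule sum_mono2[OF finite_fuzzy_edges[OF \<open>finite V\<close>]])
    show "(\<lambda>u. {v, u}) ` (V - {v}) \<subseteq> fuzzy_edges V"
      using \<open>v \<in> V\<close> by (auto simp: fuzzy_edges_def)
    show "0 \<le> edge_weight \<mu> e" if "e \<in> fuzzy_edges V - (\<lambda>u. {v, u}) ` (V - {v})" for e
      using that nonneg edge_weight_doubleton[of V \<mu>, OF sym] by (auto simp: fuzzy_edges_def)
  qed
  finally show ?thesis
    by (simp add: fuzzy_size_eq_sum_edges)
qed

lemma sum_squared_deviation_from_mean:
  fixes f :: "'a \<Rightarrow> real"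
  shows "(\<Sum>x\<in>A. (f x - sum f A / card A)\<^sup>2) = (\<Sum>x\<in>A. (f x)\<^sup>2) - (sum f A)\<^sup>2 / card A"
proof (cases "card A = 0")
  case True
  then show ?thesis by (auto simp: card_eq_0_iff)
next
  case False
  have "(\<Sum>x\<in>A. (f x - a)\<^sup>2) = (\<Sum>x\<in>A. (f x)\<^sup>2) - 2 * a * sum f A + card A * a\<^sup>2" for a :: real
    by (simp add: power2_diff sum.distrib sum_subtractf sum_distrib_left sum_distrib_right mult_ac)
  then show ?thesis
    using False by (simp add: power2_eq_square)
qed

lemma sum_squares_le_bound_mult_sum:
  fixes f :: "'a \<Rightarrow> real"
  assumes "\<And>x. x \<in> A \<Longrightarrow> 0 \<le> f x \<and> f x \<le> M"
  shows "(\<Sum>x\<in>A. (f x)\<^sup>2) \<le> M * sum f A"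
proof -
  have "(\<Sum>x\<in>A. (f x)\<^sup>2) \<le> (\<Sum>x\<in>A. M * f x)"
    using assms by (intro sum_mono) (simp add: power2_eq_square mult_right_mono)
  then show ?thesis
    by (simp add: sum_distrib_left)
qed

lemma sum_fuzzy_degree_squares_le:
  assumes "finite V" and sym: "\<And>a b. a \<in> V \<Longrightarrow> b \<in> V \<Longrightarrow> \<mu> a b = \<mu> b a"
    and nonneg: "\<And>a b. a \<in> V \<Longrightarrow> b \<in> V \<Longrightarrow> 0 \<le> \<mu> a b"
  shows "(\<Sum>v\<in>V. (fuzzy_degree V \<mu> v)\<^sup>2) \<le> 2 * (fuzzy_size V \<mu>)\<^sup>2"
proof -
  have "0 \<le> fuzzy_degree V \<mu> v \<and> fuzzy_degree V \<mu> v \<le> fuzzy_size V \<mu>" if "v \<in> V" for v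
    using fuzzy_degree_nonneg[of V \<mu> v] nonneg that
      fuzzy_degree_le_fuzzy_size[of V \<mu>, OF \<open>finite V\<close> sym nonneg that]
    by blast
  then show ?thesis
    using sum_squares_le_bound_mult_sum[of V "fuzzy_degree V \<mu>" "fuzzy_size V \<mu>"]
      sum_fuzzy_degree[of V \<mu>, OF \<open>finite V\<close> sym]
    by (simp add: power2_eq_square)
qed

lemma fuzzy_sigma_star_eq:
  assumes "finite V" and sym: "\<And>a b. a \<in> V \<Longrightarrow> b \<in> V \<Longrightarrow> \<mu> a b = \<mu> b a"
  shows "fuzzy_sigma_star V \<mu>
    = ((\<Sum>v\<in>V. (fuzzy_degree V \<mu> v)\<^sup>2) - (2 * fuzzy_size V \<mu>)\<^sup>2 / card V) / card V"
proof -
  have handshake: "sum (fuzzy_degree V \<mu>) V = 2 * fuzzy_size V \<mu>"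
    using \<open>finite V\<close> sym by (rule sum_fuzzy_degree)
  then have "fuzzy_lambda V \<mu> = sum (fuzzy_degree V \<mu>) V / card V"
    by (simp add: fuzzy_lambda_def)
  then show ?thesis
    using sum_squared_deviation_from_mean[of "fuzzy_degree V \<mu>" V]
    by (simp add: fuzzy_sigma_star_def handshake)
qed

theorem theorem2p8:
  fixes V :: "'a set" and \<nu> :: "'a \<Rightarrow> real" and \<mu> :: "'a \<Rightarrow> 'a \<Rightarrow> real"
  assumes "fuzzy_graph V \<nu> \<mu>"
  defines "n \<equiv> real (card V)"
  shows "fuzzy_sigma_star V \<mu> \<le> (n - 1)^2 * (2 * fuzzy_size V \<mu>)^2 / n^3"
proof -
  define m where "m = fuzzy_size V \<mu>"
  note sym = fuzzy_graph_sym[OF assms(1)] and nonneg = fuzzy_graph_nonneg[OF assms(1)]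
  have "finite V" using assms(1) by (rule fuzzy_graph_finite)
  have "n > 0"
    using \<open>finite V\<close> fuzzy_graph_nonempty[OF assms(1)] by (simp add: n_def card_gt_0_iff)
  have "fuzzy_sigma_star V \<mu> = ((\<Sum>v\<in>V. (fuzzy_degree V \<mu> v)\<^sup>2) - (2 * m)\<^sup>2 / n) / n"
    unfolding m_def n_def using \<open>finite V\<close> sym by (rule fuzzy_sigma_star_eq)
  also have "\<dots> \<le> (2 * m\<^sup>2 - (2 * m)\<^sup>2 / n) / n"
    using sum_fuzzy_degree_squares_le[of V \<mu>, OF \<open>finite V\<close> sym nonneg] \<open>n > 0\<close>
    by (simp add: m_def divide_right_mono)
  also have "\<dots> = (n - 1)\<^sup>2 * (2 * m)\<^sup>2 / n ^ 3 - 2 * m\<^sup>2 * ((n - 1)\<^sup>2 + 1) / n ^ 3"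
    using \<open>n > 0\<close> by (simp add: field_simps power2_eq_square power3_eq_cube)
  also have "\<dots> \<le> (n - 1)\<^sup>2 * (2 * m)\<^sup>2 / n ^ 3"
    using \<open>n > 0\<close> by simp
  finally show ?thesis
    unfolding m_def .
qed

end
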